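(* Let $n\ge2$ and $\sigma,\delta,\tau\in\mathbb{C}$ with $\sigma\tau\ne0$, and let $\lambda_h=\delta+2\sqrt{\sigma\tau}\cos\frac{h\pi}{n+1}$ ($1\le h\le n$) be an eigenvalue of $T=(n;\sigma,\delta,\tau)$. Then its $\mathcal{T}$-structured condition number is \[ \kappa_{\mathcal T}(\lambda_h)=\sqrt{\frac1n+\frac1{n-1}\left(\left|\frac{\sigma}{\tau}\right|+\left|\frac{\tau}{\sigma}\right|\right)\cos^2\frac{h\pi}{n+1}}. \] In particular $\kappa_{\mathcal T}(\lambda_h)$ depends only on $h$, $n$ and $|\sigma/\tau|$.
   Context: $T=(n;\sigma,\delta,\tau)$ is the $n\times n$ tridiagonal Toeplitz matrix with diagonal $\delta$, superdiagonal $\tau$, subdiagonal $\sigma$. Its eigenvalue $\lambda_h$ has right eigenvector $x_h$ with components $x_{h,k}=(\sqrt{\sigma/\tau})^k\sin\frac{hk\pi}{n+1}$ and left eigenvector $y_h$ ($y_h^HT=\lambda_hy_h^H$) with $y_{h,k}=(\sqrt{\bar\tau/\bar\sigma})^k\sin\frac{hk\pi}{n+1}$, $k=1,\dots,n$. Let $\widetilde x_h=x_h/\|x_h\|_2$, $\widetilde y_h=y_h/\|y_h\|_2$, $\kappa(\lambda_h)=\|x_h\|_2\|y_h\|_2/|y_h^Hx_h|$, and $W_h=\widetilde y_h\widetilde x_h^H$ (the Wilkinson perturbation). Let $\mathcal T\subset\mathbb{C}^{n\times n}$ be the subspace of $n\times n$ tridiagonal Toeplitz matrices and $W_h|_{\mathcal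 T}$ the orthogonal projection of $W_h$ onto $\mathcal T$ with respect to the Frobenius inner product. The $\mathcal T$-structured condition number is $\kappa_{\mathcal T}(\lambda_h)=\kappa(\lambda_h)\,\|W_h|_{\mathcal T}\|_F$. *)

theory Defs
  imports Complex_Main
begin

text \<open>Matrices of size n are represented as functions nat => nat => complex,
  indexed by 1..n and zero outside; vectors as nat => complex indexed by 1..n.\<close>

definition tridiag_toeplitz :: "nat \<Rightarrow> complex \<Rightarrow> complex \<Rightarrow> complex \<Rightarrow> nat \<Rightarrow> nat \<Rightarrow> complex" where
  "tridiag_toeplitz n \<sigma> \<delta> \<tau> i j =
     (if 1 \<le> i \<and> i \<le> n \<and> 1 \<le> j \<and> j \<le> n then
        (if i = j then \<delta> else if j = i + 1 then \<tau> else if i = j + 1 then \<sigma> else 0)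
      else 0)"

definition tt_space :: "nat \<Rightarrow> (nat \<Rightarrow> nat \<Rightarrow> complex) set" where
  "tt_space n = {M. \<exists>\<sigma> \<delta> \<tau>. M = tridiag_toeplitz n \<sigma> \<delta> \<tau>}"

definition vnorm :: "nat \<Rightarrow> (nat \<Rightarrow> complex) \<Rightarrow> real" where
  "vnorm n v = sqrt (\<Sum>k=1..n. (cmod (v k))^2)"

definition vinner :: "nat \<Rightarrow> (nat \<Rightarrow> complex) \<Rightarrow> (nat \<Rightarrow> complex) \<Rightarrow> complex" where
  "vinner n y x = (\<Sum>k=1..n. cnj (y k) * x k)"

definition frob_inner :: "nat \<Rightarrow> (nat \<Rightarrow> nat \<Rightarrow> complex) \<Rightarrow> (nat \<Rightarrow> nat \<Rightarrow> complex) \<Rightarrow> complex" where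
  "frob_inner n A B = (\<Sum>i=1..n. \<Sum>j=1..n. A i j * cnj (B i j))"

definition frob_norm :: "nat \<Rightarrow> (nat \<Rightarrow> nat \<Rightarrow> complex) \<Rightarrow> real" where
  "frob_norm n A = sqrt (\<Sum>i=1..n. \<Sum>j=1..n. (cmod (A i j))^2)"

definition proj_tt :: "nat \<Rightarrow> (nat \<Rightarrow> nat \<Rightarrow> complex) \<Rightarrow> (nat \<Rightarrow> nat \<Rightarrow> complex)" where
  "proj_tt n W = (THE P. P \<in> tt_space n \<and>
      (\<forall>M\<in>tt_space n. frob_inner n (\<lambda>i j. W i j - P i j) M = 0))"

definition right_ev :: "nat \<Rightarrow> complex \<Rightarrow> complex \<Rightarrow> nat \<Rightarrow> nat \<Rightarrow> complex" where
  "right_ev n \<sigma> \<tau> h k = (csqrt (\<sigma> / \<tau>)) ^ k * complex_of_real (sin (real h * real k * pi / real (n + 1)))"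

definition left_ev :: "nat \<Rightarrow> complex \<Rightarrow> complex \<Rightarrow> nat \<Rightarrow> nat \<Rightarrow> complex" where
  "left_ev n \<sigma> \<tau> h k = (csqrt (cnj \<tau> / cnj \<sigma>)) ^ k * complex_of_real (sin (real h * real k * pi / real (n + 1)))"

definition cond_num :: "nat \<Rightarrow> complex \<Rightarrow> complex \<Rightarrow> nat \<Rightarrow> real" where
  "cond_num n \<sigma> \<tau> h =
     vnorm n (right_ev n \<sigma> \<tau> h) * vnorm n (left_ev n \<sigma> \<tau> h)
       / cmod (vinner n (left_ev n \<sigma> \<tau> h) (right_ev n \<sigma> \<tau> h))"

definition wilkinson :: "nat \<Rightarrow> complex \<Rightarrow> complex \<Rightarrow> nat \<Rightarrow> nat \<Rightarrow> nat \<Rightarrow> complex" where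
  "wilkinson n \<sigma> \<tau> h i j =
     (if 1 \<le> i \<and> i \<le> n \<and> 1 \<le> j \<and> j \<le> n then
        (left_ev n \<sigma> \<tau> h i / complex_of_real (vnorm n (left_ev n \<sigma> \<tau> h)))
        * cnj (right_ev n \<sigma> \<tau> h j / complex_of_real (vnorm n (right_ev n \<sigma> \<tau> h)))
      else 0)"

text \<open>Structured condition number of lambda_h for T = (n; sigma, delta, tau).
  (It does not depend on delta, which is kept as an argument to mirror the paper.)\<close>
definition struct_cond_num :: "nat \<Rightarrow> complex \<Rightarrow> complex \<Rightarrow> complex \<Rightarrow> nat \<Rightarrow> real" where
  "struct_cond_num n \<sigma> \<delta> \<tau> h =
     cond_num n \<sigma> \<tau> h * frob_norm n (proj_tt n (wilkinson n \<sigma> \<tau> h))"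

end

theory Submission
  imports Defs
begin

text \<open>The orthogonal projection onto tridiagonal Toeplitz matrices replaces each of the three
  diagonals by its mean. For the rank-one matrix W = y~ x~^H the norms of x and y then cancel
  against kappa(lambda_h), so kappa_T(lambda_h)^2 = (|s_0|^2 / n + (|s_1|^2 + |s_-1|^2) / (n - 1)) / |y^H x|^2,
  where s_0, s_1, s_-1 are the sums of the main, super- and subdiagonal of y x^H.
  Since conj (sqrt (conj tau / conj sigma)) * sqrt (sigma / tau) = 1, the geometric factors of the
  eigenvectors cancel on the main diagonal and leave a single factor of modulus
  sqrt |sigma / tau| resp. sqrt |tau / sigma| on the off-diagonals. What remains are the sums
  sum_k sin^2 (k theta) = (n + 1) / 2 and sum_k sin (k theta) sin ((k + 1) theta) = (n + 1) / 2 * cos theta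
  for theta = h pi / (n + 1), which telescope because (n + 1) theta is a multiple of pi.\<close>

lemma sum_superdiagonal:
  fixes f :: "nat \<Rightarrow> nat \<Rightarrow> 'a::comm_monoid_add"
  shows "(\<Sum>i=1..n. \<Sum>j=1..n. if j = Suc i then f i j else 0) = (\<Sum>i=1..n-1. f i (Suc i))"
proof -
  have "(\<Sum>i=1..n. \<Sum>j=1..n. if j = Suc i then f i j else 0) = (\<Sum>i=1..n. if Suc i \<le> n then f i (Suc i) else 0)"
    by (intro sum.cong) (auto simp: sum.delta')
  also have "\<dots> = (\<Sum>i=1..n-1. f i (Suc i))"
    by (intro sum.mono_neutral_cong_right) auto
  finally show ?thesis .
qed

lemma frob_inner_tridiag_toeplitz:
  "frob_inner n A (tridiag_toeplitz n s d t) =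
     cnj d * (\<Sum>i=1..n. A i i) + cnj t * (\<Sum>i=1..n-1. A i (Suc i)) + cnj s * (\<Sum>i=1..n-1. A (Suc i) i)"
proof -
  have entry: "A i j * cnj (tridiag_toeplitz n s d t i j) =
      cnj d * (if j = i then A i j else 0) + cnj t * (if j = Suc i then A i j else 0)
      + cnj s * (if i = Suc j then A i j else 0)" if "i \<in> {1..n}" "j \<in> {1..n}" for i j
    using that by (auto simp: tridiag_toeplitz_def)
  have diag: "(\<Sum>i=1..n. \<Sum>j=1..n. if j = i then A i j else 0) = (\<Sum>i=1..n. A i i)"
    by (intro sum.cong) (auto simp: sum.delta')
  have sub: "(\<Sum>i=1..n. \<Sum>j=1..n. if i = Suc j then A i j else 0) = (\<Sum>i=1..n-1. A (Suc i) i)"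
    by (subst sum.swap) (rule sum_superdiagonal)
  have "frob_inner n A (tridiag_toeplitz n s d t) =
      (\<Sum>i=1..n. \<Sum>j=1..n. cnj d * (if j = i then A i j else 0) + cnj t * (if j = Suc i then A i j else 0)
      + cnj s * (if i = Suc j then A i j else 0))"
    unfolding frob_inner_def by (intro sum.cong refl) (simp add: entry)
  also have "\<dots> = cnj d * (\<Sum>i=1..n. \<Sum>j=1..n. if j = i then A i j else 0)
      + cnj t * (\<Sum>i=1..n. \<Sum>j=1..n. if j = Suc i then A i j else 0)
      + cnj s * (\<Sum>i=1..n. \<Sum>j=1..n. if i = Suc j then A i j else 0)"
    by (simp only: sum.distrib sum_distrib_left)
  finally show ?thesis by (simp only: diag sub sum_superdiagonal)
qed

lemma tridiag_toeplitz_diagonal_sums: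
  "(\<Sum>i=1..n. tridiag_toeplitz n s d t i i) = of_nat n * d"
  "(\<Sum>i=1..n-1. tridiag_toeplitz n s d t i (Suc i)) = of_nat (n - 1) * t"
  "(\<Sum>i=1..n-1. tridiag_toeplitz n s d t (Suc i) i) = of_nat (n - 1) * s"
proof -
  have "(\<Sum>i=1..n. tridiag_toeplitz n s d t i i) = (\<Sum>i=1..n. d)"
    "(\<Sum>i=1..n-1. tridiag_toeplitz n s d t i (Suc i)) = (\<Sum>i=1..n-1. t)"
    "(\<Sum>i=1..n-1. tridiag_toeplitz n s d t (Suc i) i) = (\<Sum>i=1..n-1. s)"
    by (intro sum.cong; auto simp: tridiag_toeplitz_def)+
  then show "(\<Sum>i=1..n. tridiag_toeplitz n s d t i i) = of_nat n * d"
    "(\<Sum>i=1..n-1. tridiag_toeplitz n s d t i (Suc i)) = of_nat (n - 1) * t"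
    "(\<Sum>i=1..n-1. tridiag_toeplitz n s d t (Suc i) i) = of_nat (n - 1) * s"
    by simp_all
qed

lemma frob_norm_tridiag_toeplitz:
  "frob_norm n (tridiag_toeplitz n s d t) =
     sqrt (real n * (cmod d)\<^sup>2 + real (n - 1) * ((cmod t)\<^sup>2 + (cmod s)\<^sup>2))"
proof -
  let ?T = "tridiag_toeplitz n s d t"
  have sq: "(cmod z)\<^sup>2 = Re (z * cnj z)" for z
    by (simp only: cmod_power2) (simp add: power2_eq_square)
  have "(\<Sum>i=1..n. \<Sum>j=1..n. (cmod (?T i j))\<^sup>2) = Re (frob_inner n ?T ?T)"
    by (simp add: frob_inner_def sq Re_sum)
  also have "\<dots> = real n * (cmod d)\<^sup>2 + real (n - 1) * ((cmod t)\<^sup>2 + (cmod s)\<^sup>2)"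
    by (simp only: frob_inner_tridiag_toeplitz tridiag_toeplitz_diagonal_sums) (simp add: sq algebra_simps)
  finally show ?thesis unfolding frob_norm_def by simp
qed

lemma proj_tt_eq_diagonal_means:
  assumes "n \<ge> 2"
  shows "proj_tt n W = tridiag_toeplitz n
     ((\<Sum>i=1..n-1. W (Suc i) i) / of_nat (n - 1)) ((\<Sum>i=1..n. W i i) / of_nat n)
     ((\<Sum>i=1..n-1. W i (Suc i)) / of_nat (n - 1))"
proof -
  define S0 S1 S2 where "S0 = (\<Sum>i=1..n. W i i)" and "S1 = (\<Sum>i=1..n-1. W i (Suc i))"
    and "S2 = (\<Sum>i=1..n-1. W (Suc i) i)"
  have nz: "(of_nat n :: complex) \<noteq> 0" "(of_nat (n - 1) :: complex) \<noteq> 0"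
    using assms by auto
  have residual: "frob_inner n (\<lambda>i j. W i j - tridiag_toeplitz n s' d' t' i j) (tridiag_toeplitz n s d t)
     = cnj d * (S0 - of_nat n * d') + cnj t * (S1 - of_nat (n - 1) * t') + cnj s * (S2 - of_nat (n - 1) * s')"
    for s' d' t' s d t
    by (simp only: frob_inner_tridiag_toeplitz sum_subtractf tridiag_toeplitz_diagonal_sums S0_def S1_def S2_def)
  have mem: "tridiag_toeplitz n s d t \<in> tt_space n" for s d t
    unfolding tt_space_def by auto
  let ?P = "tridiag_toeplitz n (S2 / of_nat (n - 1)) (S0 / of_nat n) (S1 / of_nat (n - 1))"
  have "proj_tt n W = ?P"
    unfolding proj_tt_def
  proof (rule the_equality)
    show "?P \<in> tt_space n \<and> (\<forall>M\<in>tt_space n. frob_inner n (\<lambda>i j. W i j - ?P i j) M = 0)"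
      using nz by (auto simp: tt_space_def residual)
  next
    fix P
    assume P: "P \<in> tt_space n \<and> (\<forall>M\<in>tt_space n. frob_inner n (\<lambda>i j. W i j - P i j) M = 0)"
    then obtain s' d' t' where P_eq: "P = tridiag_toeplitz n s' d' t'"
      unfolding tt_space_def by auto
    have "frob_inner n (\<lambda>i j. W i j - P i j) (tridiag_toeplitz n 0 1 0) = 0"
      "frob_inner n (\<lambda>i j. W i j - P i j) (tridiag_toeplitz n 0 0 1) = 0"
      "frob_inner n (\<lambda>i j. W i j - P i j) (tridiag_toeplitz n 1 0 0) = 0"
      using P mem by blast+
    then have "d' = S0 / of_nat n" "t' = S1 / of_nat (n - 1)" "s' = S2 / of_nat (n - 1)"
      using nz unfolding P_eq residual by (simp_all add: field_simps)
    then show "P = ?P"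
      by (simp add: P_eq)
  qed
  then show ?thesis
    by (simp add: S0_def S1_def S2_def)
qed

definition normalized_outer :: "nat \<Rightarrow> (nat \<Rightarrow> complex) \<Rightarrow> (nat \<Rightarrow> complex) \<Rightarrow> nat \<Rightarrow> nat \<Rightarrow> complex" where
  "normalized_outer n y x i j =
     (if 1 \<le> i \<and> i \<le> n \<and> 1 \<le> j \<and> j \<le> n then
        (y i / complex_of_real (vnorm n y)) * cnj (x j / complex_of_real (vnorm n x))
      else 0)"

lemma wilkinson_eq_normalized_outer:
  "wilkinson n \<sigma> \<tau> h = normalized_outer n (left_ev n \<sigma> \<tau> h) (right_ev n \<sigma> \<tau> h)"
  by (simp add: fun_eq_iff wilkinson_def normalized_outer_def)

lemma structured_cond_normalized_outer:
  assumes n: "n \<ge> 2" and x: "vnorm n x > 0" and y: "vnorm n y > 0"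
  shows "vnorm n x * vnorm n y / cmod (vinner n y x) * frob_norm n (proj_tt n (normalized_outer n y x)) =
    sqrt ((cmod (\<Sum>i=1..n. y i * cnj (x i)))\<^sup>2 / real n
      + ((cmod (\<Sum>i=1..n-1. y i * cnj (x (Suc i))))\<^sup>2
         + (cmod (\<Sum>i=1..n-1. y (Suc i) * cnj (x i)))\<^sup>2) / (real n - 1))
    / cmod (vinner n y x)"
proof -
  define N where "N = vnorm n x * vnorm n y"
  have N: "N > 0" using x y by (simp add: N_def)
  define S0 S1 S2 where "S0 = (\<Sum>i=1..n. y i * cnj (x i))" and "S1 = (\<Sum>i=1..n-1. y i * cnj (x (Suc i)))"
    and "S2 = (\<Sum>i=1..n-1. y (Suc i) * cnj (x i))"
  define W where "W = normalized_outer n y x"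
  have W: "W i j = y i * cnj (x j) / of_real N" if "i \<in> {1..n}" "j \<in> {1..n}" for i j
    using that by (simp add: W_def normalized_outer_def N_def complex_cnj_divide)
  have "(\<Sum>i=1..n. W i i) = S0 / of_real N"
    "(\<Sum>i=1..n-1. W i (Suc i)) = S1 / of_real N"
    "(\<Sum>i=1..n-1. W (Suc i) i) = S2 / of_real N"
    unfolding S0_def S1_def S2_def sum_divide_distrib by (rule sum.cong; auto simp: W)+
  then have "frob_norm n (proj_tt n W) =
      sqrt (real n * (cmod (S0 / (of_real N * of_nat n)))\<^sup>2 + real (n - 1) *
        ((cmod (S1 / (of_real N * of_nat (n - 1))))\<^sup>2 + (cmod (S2 / (of_real N * of_nat (n - 1))))\<^sup>2))"
    using n by (simp add: proj_tt_eq_diagonal_means frob_norm_tridiag_toeplitz)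
  also have "\<dots> = sqrt (((cmod S0)\<^sup>2 / real n + ((cmod S1)\<^sup>2 + (cmod S2)\<^sup>2) / (real n - 1)) / N\<^sup>2)"
  proof -
    have norm_quotient: "cmod (S / (of_real N * of_nat k)) = cmod S / (N * real k)" for S k
      using N by (simp add: norm_divide norm_mult)
    have rescale: "p * (a / (N * p))\<^sup>2 + q * ((b / (N * q))\<^sup>2 + (c / (N * q))\<^sup>2)
        = (a\<^sup>2 / p + (b\<^sup>2 + c\<^sup>2) / q) / N\<^sup>2" if "p > 0" "q > 0" for p q a b c :: real
      using N that by (simp add: field_simps power2_eq_square)
    have "real (n - 1) = real n - 1" "real n - 1 > 0"
      using n by (simp_all add: of_nat_diff)
    then show ?thesis
      using n by (simp only: norm_quotient rescale)
  qed
  also have "\<dots> = sqrt ((cmod S0)\<^sup>2 / real n + ((cmod S1)\<^sup>2 + (cmod S2)\<^sup>2) / (real n - 1)) / N"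
    using N by (simp add: real_sqrt_divide)
  finally have "N * frob_norm n (proj_tt n W) =
      sqrt ((cmod S0)\<^sup>2 / real n + ((cmod S1)\<^sup>2 + (cmod S2)\<^sup>2) / (real n - 1))"
    using N by simp
  then show ?thesis
    unfolding W_def N_def S0_def S1_def S2_def by (simp only: times_divide_eq_left)
qed

lemma sum_cos_arith_progression:
  fixes \<alpha> \<theta> :: real
  shows "2 * sin \<alpha> * (\<Sum>k<N. cos (\<theta> + 2 * real k * \<alpha>))
    = sin (\<theta> + (2 * real N - 1) * \<alpha>) - sin (\<theta> - \<alpha>)"
proof (induction N)
  case 0
  show ?case by simp
next
  case (Suc N)
  let ?\<beta> = "\<theta> + 2 * real N * \<alpha>"
  have "2 * sin \<alpha> * cos ?\<beta> = sin (?\<beta> + \<alpha>) - sin (?\<beta> - \<alpha>)"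
    using cos_times_sin[of ?\<beta> \<alpha>] by (simp add: ac_simps)
  moreover have "?\<beta> + \<alpha> = \<theta> + (2 * real (Suc N) - 1) * \<alpha>" "?\<beta> - \<alpha> = \<theta> + (2 * real N - 1) * \<alpha>"
    by (simp_all add: algebra_simps)
  ultimately show ?case
    using Suc.IH by (simp add: distrib_left)
qed

lemma sum_cos_arith_progression_eq_0:
  fixes \<alpha> \<theta> :: real
  assumes "sin \<alpha> \<noteq> 0" and "real N * \<alpha> = real h * pi"
  shows "(\<Sum>k<N. cos (\<theta> + 2 * real k * \<alpha>)) = 0"
proof -
  have "\<theta> + (2 * real N - 1) * \<alpha> = \<theta> - \<alpha> + 2 * real h * pi"
    using assms(2) by argo
  then have "sin (\<theta> + (2 * real N - 1) * \<alpha>) = sin (\<theta> - \<alpha>)"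
    by (simp only: sin_add sin_2npi cos_2npi mult_1_right mult_zero_right add_0_right)
  then show ?thesis
    using sum_cos_arith_progression[of \<alpha> \<theta> N] assms(1) by simp
qed

lemma sum_sin_squared:
  fixes \<alpha> :: real
  assumes "sin \<alpha> \<noteq> 0" and "real (n + 1) * \<alpha> = real h * pi"
  shows "(\<Sum>k=1..n. (sin (real k * \<alpha>))\<^sup>2) = real (n + 1) / 2"
proof -
  have "(\<Sum>k=1..n. (sin (real k * \<alpha>))\<^sup>2) = (\<Sum>k<n+1. (sin (real k * \<alpha>))\<^sup>2)"
    by (intro sum.mono_neutral_left) (auto simp: not_less_eq_eq)
  also have "\<dots> = (\<Sum>k<n+1. 1 / 2 - cos (0 + 2 * real k * \<alpha>) / 2)"
    by (intro sum.cong refl) (simp add: cos_double_sin mult.assoc diff_divide_distrib)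
  also have "\<dots> = real (n + 1) / 2"
    using sum_cos_arith_progression_eq_0[OF assms, of 0]
    by (simp add: sum_subtractf sum_divide_distrib[symmetric])
  finally show ?thesis .
qed

lemma sum_sin_mult_sin_Suc:
  fixes \<alpha> :: real
  assumes "sin \<alpha> \<noteq> 0" and "real (n + 1) * \<alpha> = real h * pi"
  shows "(\<Sum>k=1..n-1. sin (real k * \<alpha>) * sin (real (Suc k) * \<alpha>)) = real (n + 1) / 2 * cos \<alpha>"
proof -
  have "sin (real k * \<alpha>) * sin (real (Suc k) * \<alpha>) = 0" if "k \<in> {..<n+1} - {1..n-1}" for k
  proof -
    from that have "k = 0 \<or> k = n" by auto
    then show ?thesis using assms(2) by auto
  qed
  then have "(\<Sum>k=1..n-1. sin (real k * \<alpha>) * sin (real (Suc k) * \<alpha>))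
      = (\<Sum>k<n+1. sin (real k * \<alpha>) * sin (real (Suc k) * \<alpha>))"
    by (intro sum.mono_neutral_left) auto
  also have "\<dots> = (\<Sum>k<n+1. cos \<alpha> / 2 - cos (\<alpha> + 2 * real k * \<alpha>) / 2)"
    by (intro sum.cong refl) (simp add: sin_times_sin algebra_simps diff_divide_distrib)
  also have "\<dots> = real (n + 1) / 2 * cos \<alpha>"
    using sum_cos_arith_progression_eq_0[OF assms, of \<alpha>]
    by (simp add: sum_subtractf sum_divide_distrib[symmetric])
  finally show ?thesis .
qed

text \<open>Unlike \<open>csqrt_inverse\<close> and \<open>cnj_csqrt\<close>, this needs no branch-cut hypothesis:
  on the negative real axis the two effects cancel.\<close>

lemma csqrt_cnj_inverse:
  assumes "z \<noteq> 0"
  shows "csqrt (cnj (inverse z)) = inverse (cnj (csqrt z))"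
proof (rule csqrt_unique)
  show "(inverse (cnj (csqrt z)))\<^sup>2 = cnj (inverse z)"
    by (metis complex_cnj_inverse complex_cnj_power power2_csqrt power_inverse)
  let ?r = "csqrt z"
  have "(Re ?r)\<^sup>2 + (Im ?r)\<^sup>2 > 0"
    using assms by (metis csqrt_eq_0 complex_eq_0 less_linear not_less sum_power2_ge_zero)
  then show "0 < Re (inverse (cnj ?r)) \<or> Re (inverse (cnj ?r)) = 0 \<and> 0 \<le> Im (inverse (cnj ?r))"
    using csqrt_principal[of z] by (auto simp: divide_pos_pos)
qed

lemma cnj_csqrt_cnj_ratio_mult:
  assumes "\<sigma> * \<tau> \<noteq> 0"
  shows "cnj (csqrt (cnj \<tau> / cnj \<sigma>)) * csqrt (\<sigma> / \<tau>) = 1"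
proof -
  have "cnj \<tau> / cnj \<sigma> = cnj (inverse (\<sigma> / \<tau>))"
    by (simp add: complex_cnj_divide)
  then show ?thesis
    using assms csqrt_cnj_inverse[of "\<sigma> / \<tau>"] by (simp add: complex_cnj_inverse)
qed

lemma sin_pi_fraction_neq_0:
  assumes "1 \<le> h" and "h \<le> n"
  shows "sin (real h * pi / real (n + 1)) \<noteq> 0"
proof -
  have "real h * pi < real (n + 1) * pi"
    using assms by (intro mult_strict_right_mono) auto
  then have "0 < real h * pi / real (n + 1)" "real h * pi / real (n + 1) < pi"
    using assms by (simp_all add: field_simps)
  then show ?thesis
    using sin_gt_zero by fastforce
qed

lemma vnorm_pos:
  assumes "k \<in> {1..n}" and "v k \<noteq> 0"
  shows "vnorm n v > 0"
proof -
  have "0 < (cmod (v k))\<^sup>2"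
    using assms(2) by simp
  also have "\<dots> \<le> (\<Sum>k=1..n. (cmod (v k))\<^sup>2)"
    using assms(1) by (intro member_le_sum) auto
  finally show ?thesis
    unfolding vnorm_def by simp
qed

lemma diagonal_sums_geometric_scaling:
  fixes a b :: complex and s :: "nat \<Rightarrow> real"
  assumes ab: "cnj b * a = 1"
    and x: "\<And>k. x k = a ^ k * of_real (s k)" and y: "\<And>k. y k = b ^ k * of_real (s k)"
  shows "vinner n y x = of_real (\<Sum>k=1..n. (s k)\<^sup>2)"
    and "(\<Sum>k=1..n. y k * cnj (x k)) = of_real (\<Sum>k=1..n. (s k)\<^sup>2)"
    and "(\<Sum>k=1..n-1. y k * cnj (x (Suc k))) = cnj a * of_real (\<Sum>k=1..n-1. s k * s (Suc k))"
    and "(\<Sum>k=1..n-1. y (Suc k) * cnj (x k)) = b * of_real (\<Sum>k=1..n-1. s k * s (Suc k))"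
proof -
  have "b * cnj a = 1"
    using arg_cong[OF ab, of cnj] by simp
  with ab have ab_pow: "cnj b ^ k * a ^ k = 1" "b ^ k * cnj a ^ k = 1" for k
    by (simp_all flip: power_mult_distrib)
  have "cnj (y k) * x k = (cnj b ^ k * a ^ k) * of_real ((s k)\<^sup>2)"
    "y k * cnj (x k) = (b ^ k * cnj a ^ k) * of_real ((s k)\<^sup>2)"
    "y k * cnj (x (Suc k)) = cnj a * (b ^ k * cnj a ^ k) * of_real (s k * s (Suc k))"
    "y (Suc k) * cnj (x k) = b * (b ^ k * cnj a ^ k) * of_real (s k * s (Suc k))" for k
    by (simp_all add: x y power2_eq_square ac_simps)
  then show "vinner n y x = of_real (\<Sum>k=1..n. (s k)\<^sup>2)"
    and "(\<Sum>k=1..n. y k * cnj (x k)) = of_real (\<Sum>k=1..n. (s k)\<^sup>2)"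
    and "(\<Sum>k=1..n-1. y k * cnj (x (Suc k))) = cnj a * of_real (\<Sum>k=1..n-1. s k * s (Suc k))"
    and "(\<Sum>k=1..n-1. y (Suc k) * cnj (x k)) = b * of_real (\<Sum>k=1..n-1. s k * s (Suc k))"
    by (simp_all add: vinner_def ab_pow sum_distrib_left)
qed

lemma struct_cond_num_eq:
  assumes n: "n \<ge> 2" and st: "\<sigma> * \<tau> \<noteq> 0" and h: "1 \<le> h" "h \<le> n"
  shows "struct_cond_num n \<sigma> \<delta> \<tau> h =
    sqrt (1 / real n + 1 / (real n - 1) * (cmod (\<sigma> / \<tau>) + cmod (\<tau> / \<sigma>))
      * (cos (real h * pi / real (n + 1)))\<^sup>2)"
proof -
  define \<alpha> where "\<alpha> = real h * pi / real (n + 1)"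
  define a b where "a = csqrt (\<sigma> / \<tau>)" and "b = csqrt (cnj \<tau> / cnj \<sigma>)"
  define s where "s k = sin (real k * \<alpha>)" for k :: nat
  define x y where "x = right_ev n \<sigma> \<tau> h" and "y = left_ev n \<sigma> \<tau> h"
  define m where "m = real (n + 1) / 2"
  have x: "x k = a ^ k * of_real (s k)" and y: "y k = b ^ k * of_real (s k)" for k
    by (simp_all add: x_def y_def right_ev_def left_ev_def a_def b_def s_def \<alpha>_def ac_simps)
  have ab: "cnj b * a = 1"
    using st by (simp add: a_def b_def cnj_csqrt_cnj_ratio_mult)
  have sin_\<alpha>: "sin \<alpha> \<noteq> 0"
    unfolding \<alpha>_def using h by (rule sin_pi_fraction_neq_0)
  have period: "real (n + 1) * \<alpha> = real h * pi"
    by (simp add: \<alpha>_def)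
  have x_pos: "vnorm n x > 0" and y_pos: "vnorm n y > 0"
    using n ab sin_\<alpha> by (auto intro!: vnorm_pos[of 1] simp: x y s_def)
  note sums = diagonal_sums_geometric_scaling[OF ab x y, of n]
    sum_sin_squared[OF sin_\<alpha> period, folded s_def m_def]
    sum_sin_mult_sin_Suc[OF sin_\<alpha> period, folded s_def m_def]
  have "m > 0"
    by (simp add: m_def)
  have "struct_cond_num n \<sigma> \<delta> \<tau> h =
      sqrt (m\<^sup>2 / real n + ((cmod a * m * cos \<alpha>)\<^sup>2 + (cmod b * m * cos \<alpha>)\<^sup>2) / (real n - 1)) / m"
    unfolding struct_cond_num_def cond_num_def wilkinson_eq_normalized_outer
      x_def[symmetric] y_def[symmetric] structured_cond_normalized_outer[OF n x_pos y_pos]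
    using \<open>m > 0\<close> by (simp only: sums) (simp add: norm_mult power_mult_distrib)
  also have "\<dots> = sqrt (1 / real n + 1 / (real n - 1) * ((cmod a)\<^sup>2 + (cmod b)\<^sup>2) * (cos \<alpha>)\<^sup>2)"
  proof -
    have "m\<^sup>2 / real n + ((cmod a * m * cos \<alpha>)\<^sup>2 + (cmod b * m * cos \<alpha>)\<^sup>2) / (real n - 1)
        = m\<^sup>2 * (1 / real n + 1 / (real n - 1) * ((cmod a)\<^sup>2 + (cmod b)\<^sup>2) * (cos \<alpha>)\<^sup>2)"
      by (simp add: field_simps power_mult_distrib)
    then show ?thesis
      using \<open>m > 0\<close> by (simp add: real_sqrt_mult)
  qed
  finally show ?thesis
    by (simp add: a_def b_def \<alpha>_def norm_divide)
qed

theorem proposition9: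
  fixes n h :: nat and \<sigma> \<delta> \<tau> :: complex
  assumes "n \<ge> 2" and "\<sigma> * \<tau> \<noteq> 0" and "1 \<le> h" and "h \<le> n"
  shows "struct_cond_num n \<sigma> \<delta> \<tau> h =
           sqrt (1 / real n + 1 / (real n - 1) * (cmod (\<sigma> / \<tau>) + cmod (\<tau> / \<sigma>))
                  * (cos (real h * pi / real (n + 1)))^2)
         \<and> (\<forall>\<sigma>' \<delta>' \<tau>'. \<sigma>' * \<tau>' \<noteq> 0 \<and> cmod (\<sigma>' / \<tau>') = cmod (\<sigma> / \<tau>) \<longrightarrow>
              struct_cond_num n \<sigma>' \<delta>' \<tau>' h = struct_cond_num n \<sigma> \<delta> \<tau> h)"
proof (rule conjI[OF struct_cond_num_eq[OF assms]], intro allI impI)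
  fix \<sigma>' \<delta>' \<tau>' :: complex
  assume \<sigma>'\<tau>': "\<sigma>' * \<tau>' \<noteq> 0 \<and> cmod (\<sigma>' / \<tau>') = cmod (\<sigma> / \<tau>)"
  then have "cmod (\<tau>' / \<sigma>') = cmod (\<tau> / \<sigma>)"
    by (metis inverse_divide norm_inverse)
  with \<sigma>'\<tau>' show "struct_cond_num n \<sigma>' \<delta>' \<tau>' h = struct_cond_num n \<sigma> \<delta> \<tau> h"
    using struct_cond_num_eq[OF assms(1) _ assms(3,4)] struct_cond_num_eq[OF assms] by simp
qed

end
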